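(* A tree $T$ is compact Hausdorff in the coarse wedge topology if and only if $T$ is chain-complete and has finitely many minimal elements.
   Context: A tree is a partially ordered set in which the set of predecessors of each element is well-ordered. Levels: $T(0)$ is the set of minimal elements; $T(\alpha)$ is the set of minimal elements of $T\setminus\bigcup_{\beta<\alpha}T(\beta)$; an element is on a successor level if it lies in $T(\alpha+1)$ for some $\alpha$. $T$ is chain-complete if every nonempty chain has a supremum (least upper bound) in $T$. For $t\in T$, $V_t=\{s\in T:s\ge t\}$. The coarse wedge topology has subbase all $V_t$ and $T\setminus V_t$ with $t$ minimal or on a successor level. *)

theory Defs
  imports "HOL-Analysis.Analysis"
begin

text \<open>A tree is represented as a subset T of a partially ordered type, with the induced order.\<close>

definition preds :: "'a::order set \<Rightarrow> 'a \<Rightarrow> 'a set" where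
  "preds T t = {s \<in> T. s < t}"

definition well_ordered_set :: "'a::order set \<Rightarrow> bool" where
  "well_ordered_set A \<longleftrightarrow>
     (\<forall>x\<in>A. \<forall>y\<in>A. x \<le> y \<or> y \<le> x) \<and>
     (\<forall>B. B \<subseteq> A \<longrightarrow> B \<noteq> {} \<longrightarrow> (\<exists>b\<in>B. \<forall>c\<in>B. b \<le> c))"

definition is_tree :: "'a::order set \<Rightarrow> bool" where
  "is_tree T \<longleftrightarrow> (\<forall>t\<in>T. well_ordered_set (preds T t))"

definition minimal_elements :: "'a::order set \<Rightarrow> 'a set" where
  "minimal_elements T = {t \<in> T. preds T t = {}}"

text \<open>t lies on a successor level T(alpha+1) iff its set of predecessors (of order type the
  level of t) has a greatest element, i.e. t has an immediate predecessor.\<close>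
definition on_successor_level :: "'a::order set \<Rightarrow> 'a \<Rightarrow> bool" where
  "on_successor_level T t \<longleftrightarrow> t \<in> T \<and> (\<exists>s\<in>preds T t. \<forall>u\<in>preds T t. u \<le> s)"

definition chain_complete :: "'a::order set \<Rightarrow> bool" where
  "chain_complete T \<longleftrightarrow>
     (\<forall>C. C \<subseteq> T \<longrightarrow> C \<noteq> {} \<longrightarrow> (\<forall>x\<in>C. \<forall>y\<in>C. x \<le> y \<or> y \<le> x) \<longrightarrow>
        (\<exists>s\<in>T. (\<forall>c\<in>C. c \<le> s) \<and> (\<forall>u\<in>T. (\<forall>c\<in>C. c \<le> u) \<longrightarrow> s \<le> u)))"

definition V :: "'a::order set \<Rightarrow> 'a \<Rightarrow> 'a set" where
  "V T t = {s \<in> T. t \<le> s}"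

definition coarse_wedge_topology :: "'a::order set \<Rightarrow> 'a topology" where
  "coarse_wedge_topology T =
     topology_generated_by
       ({V T t | t. t \<in> minimal_elements T \<or> on_successor_level T t} \<union>
        {T - V T t | t. t \<in> minimal_elements T \<or> on_successor_level T t})"

end

theory Submission
  imports Defs
begin

text \<open>For t minimal or on a successor level, V t is clopen. Two comparable nodes are separated
  by such a V u with u between them, and two incomparable ones by disjoint sets V a, V b, unless
  they are distinct limit nodes with the same predecessors, which chain-completeness excludes.
  Compactness follows from Alexander's subbase lemma: a subbasic cover either contains V m for
  every minimal m, or two complements T - V u, T - V u' with u, u' incomparable, or the u with
  T - V u in the cover form a chain whose supremum is covered by some V t with t below one of them.

  Conversely, the V m for minimal m form an open cover in which each V m is needed. For a chain C,
  compactness gives a node above all subbasic nodes below C, hence above C, since in a Hausdorff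
  coarse wedge topology a limit node lies below every node above all its predecessors. The same
  fact shows that the least upper bound of C below a given one lies below all upper bounds.\<close>

definition subbasic_node :: "'a::order set \<Rightarrow> 'a \<Rightarrow> bool" where
  "subbasic_node T t \<longleftrightarrow> t \<in> minimal_elements T \<or> on_successor_level T t"

definition limit_node :: "'a::order set \<Rightarrow> 'a \<Rightarrow> bool" where
  "limit_node T t \<longleftrightarrow> t \<in> T \<and> preds T t \<noteq> {} \<and> \<not> (\<exists>s\<in>preds T t. \<forall>u\<in>preds T t. u \<le> s)"

definition lub_in :: "'a::order set \<Rightarrow> 'a set \<Rightarrow> 'a \<Rightarrow> bool" where
  "lub_in T C s \<longleftrightarrow> s \<in> T \<and> (\<forall>c\<in>C. c \<le> s) \<and> (\<forall>u\<in>T. (\<forall>c\<in>C. c \<le> u) \<longrightarrow> s \<le> u)"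

definition coarse_wedge_subbase :: "'a::order set \<Rightarrow> 'a set set" where
  "coarse_wedge_subbase T = {V T t | t. subbasic_node T t} \<union> {T - V T t | t. subbasic_node T t}"

lemma chain_complete_iff_lub_in:
  "chain_complete T \<longleftrightarrow>
     (\<forall>C. C \<subseteq> T \<longrightarrow> C \<noteq> {} \<longrightarrow> (\<forall>x\<in>C. \<forall>y\<in>C. x \<le> y \<or> y \<le> x) \<longrightarrow> (\<exists>s. lub_in T C s))"
  unfolding chain_complete_def lub_in_def by blast

lemma subbasic_node_in: "subbasic_node T t \<Longrightarrow> t \<in> T"
  unfolding subbasic_node_def minimal_elements_def on_successor_level_def by auto

lemma limit_node_iff: "limit_node T t \<longleftrightarrow> t \<in> T \<and> \<not> subbasic_node T t"
  unfolding limit_node_def subbasic_node_def minimal_elements_def on_successor_level_def by auto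

lemma minimal_elements_eq_if_le:
  assumes "m \<in> minimal_elements T" "t \<in> T" "t \<le> m" shows "t = m"
  using assms unfolding minimal_elements_def preds_def by auto

lemma lub_in_mem_if_subbasic_node:
  assumes "lub_in T B s" "subbasic_node T s" "B \<subseteq> T" "B \<noteq> {}"
  shows "s \<in> B"
proof (rule ccontr)
  assume "s \<notin> B"
  then have B_preds: "B \<subseteq> preds T s"
    using assms(1,3) unfolding lub_in_def preds_def by (auto simp: less_le)
  then have "s \<notin> minimal_elements T"
    using assms(4) unfolding minimal_elements_def by auto
  then obtain p where p: "p \<in> preds T s" "\<forall>v\<in>preds T s. v \<le> p"
    using assms(2) unfolding subbasic_node_def on_successor_level_def by blast
  then have "s \<le> p"
    using assms(1) B_preds unfolding lub_in_def preds_def by blast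
  then show False
    using p(1) unfolding preds_def by auto
qed

lemma finite_below_chain_bounded:
  fixes C :: "'a::order set"
  assumes "finite F" "C \<noteq> {}" "\<forall>x\<in>C. \<forall>y\<in>C. x \<le> y \<or> y \<le> x" "\<forall>s\<in>F. \<exists>c\<in>C. s \<le> c"
  shows "\<exists>c\<in>C. \<forall>s\<in>F. s \<le> c"
  using assms(1,4)
proof (induction F rule: finite_induct)
  case empty
  then show ?case using assms(2) by blast
next
  case (insert s F)
  then obtain c c' where "c \<in> C" "\<forall>r\<in>F. r \<le> c" "c' \<in> C" "s \<le> c'"
    by auto
  then show ?case
    using assms(3) by (metis insert_iff order_trans)
qed

lemma tree_below_comparable:
  assumes "is_tree T" "t \<in> T" "a \<in> T" "b \<in> T" "a \<le> t" "b \<le> t"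
  shows "a \<le> b \<or> b \<le> a"
proof (cases "a = t \<or> b = t")
  case True
  then show ?thesis using assms by auto
next
  case False
  then have "a \<in> preds T t" "b \<in> preds T t"
    using assms unfolding preds_def by auto
  then show ?thesis
    using assms(1,2) unfolding is_tree_def well_ordered_set_def by blast
qed

lemma tree_has_least_below:
  assumes "is_tree T" "t \<in> T" "B \<subseteq> T" "b \<in> B" "\<forall>b\<in>B. b \<le> t"
  shows "\<exists>b\<in>B. \<forall>c\<in>B. b \<le> c"
proof (cases "B - {t} = {}")
  case True
  then show ?thesis using assms(4) by auto
next
  case False
  have "B - {t} \<subseteq> preds T t"
    using assms(3,5) unfolding preds_def by force
  then obtain b where b: "b \<in> B - {t}" "\<forall>c\<in>B - {t}. b \<le> c"
    using False assms(1,2) unfolding is_tree_def well_ordered_set_def by metis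
  then have "b \<le> t" using assms(5) by auto
  then show ?thesis using b by blast
qed

lemma tree_minimal_below:
  assumes "is_tree T" "t \<in> T"
  shows "\<exists>m\<in>minimal_elements T. m \<le> t"
proof -
  have "\<exists>m\<in>{u \<in> T. u \<le> t}. \<forall>u\<in>{u \<in> T. u \<le> t}. m \<le> u"
    by (rule tree_has_least_below[OF assms, of _ t]) (use assms(2) in auto)
  then obtain m where m: "m \<in> T" "m \<le> t" "\<forall>u\<in>T. u \<le> t \<longrightarrow> m \<le> u"
    by blast
  have "\<not> v < m" if "v \<in> T" for v
  proof
    assume "v < m"
    then have "m \<le> v" using m that by auto
    then show False using \<open>v < m\<close> by simp
  qed
  then have "preds T m = {}" unfolding preds_def by auto
  then show ?thesis using m unfolding minimal_elements_def by auto
qed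

text \<open>The least u \<le> c not below p has p as its immediate predecessor.\<close>
lemma tree_subbasic_node_between:
  assumes "is_tree T" "p \<in> T" "c \<in> T" "p < c"
  shows "\<exists>u. subbasic_node T u \<and> p < u \<and> u \<le> c"
proof -
  define B where "B = {u \<in> T. u \<le> c \<and> \<not> u \<le> p}"
  have "\<exists>u\<in>B. \<forall>w\<in>B. u \<le> w"
    by (rule tree_has_least_below[OF assms(1,3), of _ c]) (use assms in \<open>auto simp: B_def\<close>)
  then obtain u where u: "u \<in> B" "\<forall>w\<in>B. u \<le> w" by blast
  then have uT: "u \<in> T" "u \<le> c" "\<not> u \<le> p" unfolding B_def by auto
  then have "p \<le> u"
    using tree_below_comparable[OF assms(1,3) uT(1) assms(2) uT(2)] assms(4) by auto
  with uT(3) have "p < u" by (simp add: less_le_not_le)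
  have "v \<le> p" if "v \<in> T" "v < u" for v
  proof (rule ccontr)
    assume "\<not> v \<le> p"
    then have "v \<in> B" using that uT(2) unfolding B_def by auto
    then show False using u(2) \<open>v < u\<close> by (simp add: leD)
  qed
  then have "on_successor_level T u"
    using uT(1) assms(2) \<open>p < u\<close> unfolding on_successor_level_def preds_def by auto
  then show ?thesis
    using \<open>p < u\<close> uT(2) unfolding subbasic_node_def by auto
qed

lemma V_disjoint_if_incomparable:
  assumes "is_tree T" "a \<in> T" "b \<in> T" "\<not> a \<le> b" "\<not> b \<le> a"
  shows "V T a \<inter> V T b = {}"
  using tree_below_comparable[OF assms(1) _ assms(2,3)] assms(4,5) unfolding V_def by blast

lemma topology_generated_by_eq_subbase_topology:
  assumes "\<Union>S = U"
  shows "topology (arbitrary union_of (finite intersection_of (\<lambda>x. x \<in> S) relative_to U))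
         = topology_generated_by S"
proof -
  let ?X = "topology (arbitrary union_of (finite intersection_of (\<lambda>x. x \<in> S) relative_to U))"
  have "openin ?X A \<longleftrightarrow> openin (topology_generated_by S) A" for A
  proof
    assume "openin ?X A"
    moreover have "openin (topology_generated_by S) U"
      using openin_topspace[of "topology_generated_by S"] assms by simp
    ultimately show "openin (topology_generated_by S) A"
      using minimal_topology_subbase[of "\<lambda>x. x \<in> S" "topology_generated_by S" U A]
        topology_generated_by_Basis by blast
  next
    assume "openin (topology_generated_by S) A"
    then have "generate_topology_on S A" by (rule openin_topology_generated_by)
    then show "openin ?X A"
    proof (rule generate_topology_on_coarsest[rotated 2])
      fix s assume "s \<in> S"
      then have "s = U \<inter> s" using assms by auto
      then show "openin ?X s"
        using \<open>s \<in> S\<close>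
        by (metis arbitrary_union_of_inc finite_intersection_of_inc openin_subbase relative_to_inc)
    qed simp
  qed
  then show ?thesis by (simp add: topology_eq)
qed

lemma coarse_wedge_topology_eq: "coarse_wedge_topology T = topology_generated_by (coarse_wedge_subbase T)"
  unfolding coarse_wedge_topology_def coarse_wedge_subbase_def subbasic_node_def by simp

lemma Union_coarse_wedge_subbase:
  assumes "is_tree T"
  shows "\<Union>(coarse_wedge_subbase T) = T"
proof
  show "\<Union>(coarse_wedge_subbase T) \<subseteq> T"
    unfolding coarse_wedge_subbase_def V_def by auto
  show "T \<subseteq> \<Union>(coarse_wedge_subbase T)"
  proof
    fix x assume "x \<in> T"
    then obtain m where "m \<in> minimal_elements T" "m \<le> x"
      using tree_minimal_below[OF assms] by blast
    then have "V T m \<in> coarse_wedge_subbase T" "x \<in> V T m"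
      using \<open>x \<in> T\<close> unfolding coarse_wedge_subbase_def subbasic_node_def V_def by auto
    then show "x \<in> \<Union>(coarse_wedge_subbase T)" by blast
  qed
qed

lemma topspace_coarse_wedge_topology:
  "is_tree T \<Longrightarrow> topspace (coarse_wedge_topology T) = T"
  by (simp add: coarse_wedge_topology_eq Union_coarse_wedge_subbase)

lemma coarse_wedge_subbase_cases:
  assumes "K \<in> coarse_wedge_subbase T"
  obtains t where "subbasic_node T t" "K = V T t" | t where "subbasic_node T t" "K = T - V T t"
  using assms unfolding coarse_wedge_subbase_def by blast

lemma openin_V: "subbasic_node T t \<Longrightarrow> openin (coarse_wedge_topology T) (V T t)"
  unfolding coarse_wedge_topology_eq
  by (rule topology_generated_by_Basis) (auto simp: coarse_wedge_subbase_def)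

lemma openin_Diff_V: "subbasic_node T t \<Longrightarrow> openin (coarse_wedge_topology T) (T - V T t)"
  unfolding coarse_wedge_topology_eq
  by (rule topology_generated_by_Basis) (auto simp: coarse_wedge_subbase_def)

lemma closedin_V:
  "\<lbrakk>is_tree T; subbasic_node T t\<rbrakk> \<Longrightarrow> closedin (coarse_wedge_topology T) (V T t)"
  unfolding closedin_def topspace_coarse_wedge_topology
  using openin_Diff_V[of T t] by (auto simp: V_def double_diff)

lemma coarse_wedge_open_contains_tail:
  assumes tree: "is_tree T" and a: "limit_node T a"
    and U: "openin (coarse_wedge_topology T) U" "a \<in> U"
  shows "\<exists>d\<in>preds T a. \<forall>e\<in>preds T a. d \<le> e \<longrightarrow> e \<in> U"
proof -
  have "generate_topology_on (coarse_wedge_subbase T) U"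
    using U(1) unfolding coarse_wedge_topology_eq by (rule openin_topology_generated_by)
  then show ?thesis
    using U(2)
  proof (induction rule: generate_topology_on.induct)
    case Empty
    then show ?case by simp
  next
    case (Int U1 U2)
    then obtain d1 d2 where d1: "d1 \<in> preds T a" "\<forall>e\<in>preds T a. d1 \<le> e \<longrightarrow> e \<in> U1"
      and d2: "d2 \<in> preds T a" "\<forall>e\<in>preds T a. d2 \<le> e \<longrightarrow> e \<in> U2"
      by blast
    have "d1 \<le> d2 \<or> d2 \<le> d1"
      using d1(1) d2(1) tree a unfolding is_tree_def well_ordered_set_def limit_node_def by blast
    then show ?case
      using d1 d2 by (meson IntI order_trans)
  next
    case (UN K)
    then show ?case by blast
  next
    case (Basis K)
    then show ?case
    proof (cases rule: coarse_wedge_subbase_cases)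
      case (1 t)
      with Basis.prems have "t \<le> a" unfolding V_def by simp
      moreover have "t \<noteq> a" using 1(1) a by (auto simp: limit_node_iff)
      ultimately have "t \<in> preds T a" using subbasic_node_in[OF 1(1)] unfolding preds_def by simp
      then show ?thesis using 1(2) unfolding V_def preds_def by auto
    next
      case (2 t)
      with Basis.prems have "\<not> t \<le> a" unfolding V_def by simp
      then have "\<forall>e\<in>preds T a. e \<in> K"
        using 2(2) unfolding preds_def V_def by (auto dest: order_trans less_imp_le)
      then show ?thesis using a unfolding limit_node_def by blast
    qed
  qed
qed

text \<open>Every neighbourhood of either node contains a tail of their common predecessors.\<close>
lemma Hausdorff_limit_nodes_eq:
  assumes tree: "is_tree T" and H: "Hausdorff_space (coarse_wedge_topology T)"
    and a: "limit_node T a" and b: "limit_node T b" and eq: "preds T a = preds T b"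
  shows "a = b"
proof (rule ccontr)
  assume "a \<noteq> b"
  moreover have "a \<in> T" "b \<in> T" using a b unfolding limit_node_def by auto
  ultimately obtain U W where UW: "openin (coarse_wedge_topology T) U"
    "openin (coarse_wedge_topology T) W" "a \<in> U" "b \<in> W" "disjnt U W"
    using H unfolding Hausdorff_space_def topspace_coarse_wedge_topology[OF tree] by metis
  obtain d1 where d1: "d1 \<in> preds T a" "\<forall>e\<in>preds T a. d1 \<le> e \<longrightarrow> e \<in> U"
    using coarse_wedge_open_contains_tail[OF tree a UW(1,3)] by blast
  obtain d2 where d2: "d2 \<in> preds T a" "\<forall>e\<in>preds T a. d2 \<le> e \<longrightarrow> e \<in> W"
    using coarse_wedge_open_contains_tail[OF tree b UW(2,4)] eq by auto
  have "d1 \<le> d2 \<or> d2 \<le> d1"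
    using d1(1) d2(1) tree \<open>a \<in> T\<close> unfolding is_tree_def well_ordered_set_def by blast
  then show False
    using d1 d2 UW(5) unfolding disjnt_def by blast
qed

text \<open>The least node below x that is not a predecessor of c has the same predecessors as c.\<close>
lemma Hausdorff_limit_node_le:
  assumes tree: "is_tree T" and H: "Hausdorff_space (coarse_wedge_topology T)"
    and c: "limit_node T c" and x: "x \<in> T" and below: "\<forall>p\<in>preds T c. p < x"
  shows "c \<le> x"
proof -
  define B where "B = {u \<in> T. u \<le> x \<and> u \<notin> preds T c}"
  have "x \<notin> preds T c" using below by auto
  then have "\<exists>y\<in>B. \<forall>w\<in>B. y \<le> w"
    by (intro tree_has_least_below[OF tree x, of _ x]) (use x in \<open>auto simp: B_def\<close>)
  then obtain y where y: "y \<in> B" "\<forall>w\<in>B. y \<le> w" by blast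
  then have yT: "y \<in> T" "y \<le> x" "y \<notin> preds T c" unfolding B_def by auto
  have "preds T y = preds T c"
  proof
    show "preds T y \<subseteq> preds T c"
    proof
      fix v assume "v \<in> preds T y"
      then have v: "v \<in> T" "v < y" unfolding preds_def by auto
      then have "v \<notin> B" using y(2) by (meson leD)
      then show "v \<in> preds T c" using v yT(2) unfolding B_def by auto
    qed
    show "preds T c \<subseteq> preds T y"
    proof
      fix p assume p: "p \<in> preds T c"
      then have pT: "p \<in> T" "p < c" unfolding preds_def by auto
      have "\<not> y \<le> p"
        using yT(1,3) pT(2) unfolding preds_def by (auto dest: order.strict_trans1)
      moreover have "p \<le> y \<or> y \<le> p"
        using tree_below_comparable[OF tree x pT(1) yT(1) _ yT(2)] below p by auto
      ultimately show "p \<in> preds T y"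
        using pT(1) unfolding preds_def by (auto simp: less_le)
    qed
  qed
  moreover have "limit_node T y"
    using c yT(1) calculation unfolding limit_node_def by simp
  ultimately have "y = c" using Hausdorff_limit_nodes_eq[OF tree H] c by blast
  then show ?thesis using yT(2) by simp
qed

lemma compact_coarse_wedge_imp_finite_minimal_elements:
  assumes tree: "is_tree T" and C: "compact_space (coarse_wedge_topology T)"
  shows "finite (minimal_elements T)"
proof -
  let ?M = "minimal_elements T"
  have "\<forall>U\<in>V T ` ?M. openin (coarse_wedge_topology T) U"
    using openin_V unfolding subbasic_node_def by blast
  moreover have "topspace (coarse_wedge_topology T) \<subseteq> \<Union>(V T ` ?M)"
    using tree_minimal_below[OF tree]
    unfolding topspace_coarse_wedge_topology[OF tree] V_def by blast
  ultimately obtain F where F: "finite F" "F \<subseteq> V T ` ?M" "T \<subseteq> \<Union>F"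
    using C unfolding compact_space_alt topspace_coarse_wedge_topology[OF tree] by meson
  then obtain M0 where M0: "M0 \<subseteq> ?M" "finite M0" "F = V T ` M0"
    by (meson finite_subset_image)
  have "?M \<subseteq> M0"
  proof
    fix m assume m: "m \<in> ?M"
    then obtain m0 where "m0 \<in> M0" "m \<in> V T m0"
      using F(3) M0(3) unfolding minimal_elements_def by blast
    moreover have "m0 \<in> T" using \<open>m0 \<in> M0\<close> M0(1) unfolding minimal_elements_def by auto
    ultimately show "m \<in> M0"
      using minimal_elements_eq_if_le[OF m] unfolding V_def by auto
  qed
  then show ?thesis using M0(2) by (rule finite_subset)
qed

text \<open>Finite intersection property of the closed sets V s, s a subbasic node below the chain.\<close>
lemma compact_coarse_wedge_bounds_subbasic_nodes_below_chain:
  assumes tree: "is_tree T" and cp: "compact_space (coarse_wedge_topology T)"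
    and C: "C \<subseteq> T" "C \<noteq> {}" "\<forall>x\<in>C. \<forall>y\<in>C. x \<le> y \<or> y \<le> x"
  shows "\<exists>x\<in>T. \<forall>s. subbasic_node T s \<and> (\<exists>c\<in>C. s \<le> c) \<longrightarrow> s \<le> x"
proof -
  define G where "G = {s. subbasic_node T s \<and> (\<exists>c\<in>C. s \<le> c)}"
  have closed: "\<forall>K\<in>V T ` G. closedin (coarse_wedge_topology T) K"
    using closedin_V[OF tree] unfolding G_def by blast
  have fip: "\<Inter>F \<noteq> {}" if F: "finite F" "F \<subseteq> V T ` G" for F
  proof -
    obtain G0 where G0: "G0 \<subseteq> G" "finite G0" "F = V T ` G0"
      using finite_subset_image[OF F] by blast
    then obtain c where "c \<in> C" "\<forall>s\<in>G0. s \<le> c"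
      using finite_below_chain_bounded[OF G0(2) C(2,3)] unfolding G_def by blast
    then have "c \<in> \<Inter>F" using C(1) unfolding G0(3) V_def by auto
    then show ?thesis by blast
  qed
  then have "\<Inter>(V T ` G) \<noteq> {}"
    using cp[unfolded compact_space_fip, rule_format, OF conjI[OF closed]] fip by blast
  then obtain x where x: "x \<in> \<Inter>(V T ` G)" by blast
  obtain c0 m0 where "c0 \<in> C" "m0 \<in> minimal_elements T" "m0 \<le> c0"
    using C(1,2) tree_minimal_below[OF tree] by blast
  then have "m0 \<in> G" unfolding G_def subbasic_node_def by blast
  then have "x \<in> T" using x unfolding V_def by blast
  moreover have "\<forall>s\<in>G. s \<le> x" using x unfolding V_def by blast
  ultimately show ?thesis unfolding G_def by blast
qed

lemma compact_Hausdorff_coarse_wedge_chain_bounded: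
  assumes tree: "is_tree T" and cp: "compact_space (coarse_wedge_topology T)"
    and H: "Hausdorff_space (coarse_wedge_topology T)"
    and C: "C \<subseteq> T" "C \<noteq> {}" "\<forall>x\<in>C. \<forall>y\<in>C. x \<le> y \<or> y \<le> x"
  shows "\<exists>x\<in>T. \<forall>c\<in>C. c \<le> x"
proof -
  obtain x where x: "x \<in> T" "\<And>s. subbasic_node T s \<Longrightarrow> \<exists>c\<in>C. s \<le> c \<Longrightarrow> s \<le> x"
    using compact_coarse_wedge_bounds_subbasic_nodes_below_chain[OF tree cp C] by blast
  have "c \<le> x" if c: "c \<in> C" for c
  proof (cases "subbasic_node T c")
    case True
    then show ?thesis using x(2) c by blast
  next
    case False
    then have "limit_node T c" using c C(1) by (auto simp: limit_node_iff)
    moreover have "p < x" if p: "p \<in> preds T c" for p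
    proof -
      obtain u where "subbasic_node T u" "p < u" "u \<le> c"
        using tree_subbasic_node_between[OF tree, of p c] p c C(1) unfolding preds_def by auto
      then show "p < x" using x(2) c by (meson order.strict_trans2)
    qed
    ultimately show ?thesis using Hausdorff_limit_node_le[OF tree H _ x(1)] by blast
  qed
  then show ?thesis using x(1) by blast
qed

lemma tree_minimal_upper_bound_of_chain_without_max:
  assumes tree: "is_tree T"
    and C: "C \<subseteq> T" "C \<noteq> {}" "\<forall>x\<in>C. \<forall>y\<in>C. x \<le> y \<or> y \<le> x" "\<forall>c\<in>C. \<exists>c'\<in>C. \<not> c' \<le> c"
    and \<sigma>: "\<sigma> \<in> T" "\<forall>c\<in>C. c \<le> \<sigma>" and minimal: "\<forall>p\<in>preds T \<sigma>. \<exists>c\<in>C. \<not> c \<le> p"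
  shows "limit_node T \<sigma>" "\<forall>p\<in>preds T \<sigma>. \<exists>c\<in>C. p < c"
proof -
  have C_preds: "C \<subseteq> preds T \<sigma>"
  proof
    fix c assume c: "c \<in> C"
    then obtain c' where "c' \<in> C" "\<not> c' \<le> c" using C(4) by blast
    then have "c < c'" using C(3) c by (auto simp: less_le)
    then show "c \<in> preds T \<sigma>"
      using c C(1) \<sigma>(2) \<open>c' \<in> C\<close> unfolding preds_def by (auto dest: order.strict_trans2)
  qed
  show preds_C: "\<forall>p\<in>preds T \<sigma>. \<exists>c\<in>C. p < c"
  proof
    fix p assume p: "p \<in> preds T \<sigma>"
    then have pT: "p \<in> T" "p < \<sigma>" unfolding preds_def by auto
    obtain c where c: "c \<in> C" "\<not> c \<le> p" using minimal p by blast
    then have "p \<le> c"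
      using tree_below_comparable[OF tree \<sigma>(1) pT(1), of c] C(1) \<sigma>(2) pT(2) by auto
    then show "\<exists>c\<in>C. p < c" using c by (auto simp: less_le)
  qed
  show "limit_node T \<sigma>"
    unfolding limit_node_def
  proof (intro conjI)
    show "\<sigma> \<in> T" "preds T \<sigma> \<noteq> {}" using \<sigma>(1) C(2) C_preds by auto
    show "\<not> (\<exists>s\<in>preds T \<sigma>. \<forall>u\<in>preds T \<sigma>. u \<le> s)"
      using preds_C C_preds by (meson leD subsetD)
  qed
qed

text \<open>Without a greatest element, the least upper bound below w is a limit node whose
  predecessors lie below every upper bound.\<close>
lemma Hausdorff_coarse_wedge_bounded_chain_has_lub:
  assumes tree: "is_tree T" and H: "Hausdorff_space (coarse_wedge_topology T)"
    and C: "C \<subseteq> T" "C \<noteq> {}" "\<forall>x\<in>C. \<forall>y\<in>C. x \<le> y \<or> y \<le> x"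
    and w: "w \<in> T" "\<forall>c\<in>C. c \<le> w"
  shows "\<exists>s. lub_in T C s"
proof (cases "\<exists>c\<in>C. \<forall>c'\<in>C. c' \<le> c")
  case True
  then show ?thesis using C(1) unfolding lub_in_def by blast
next
  case False
  then have no_max: "\<forall>c\<in>C. \<exists>c'\<in>C. \<not> c' \<le> c" by blast
  define B where "B = {u \<in> T. u \<le> w \<and> (\<forall>c\<in>C. c \<le> u)}"
  have "\<exists>\<sigma>\<in>B. \<forall>v\<in>B. \<sigma> \<le> v"
    by (rule tree_has_least_below[OF tree w(1), of _ w]) (use w in \<open>auto simp: B_def\<close>)
  then obtain \<sigma> where \<sigma>: "\<sigma> \<in> B" "\<forall>v\<in>B. \<sigma> \<le> v" by blast
  then have \<sigma>T: "\<sigma> \<in> T" "\<sigma> \<le> w" "\<forall>c\<in>C. c \<le> \<sigma>" unfolding B_def by auto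
  have "\<exists>c\<in>C. \<not> c \<le> p" if p: "p \<in> preds T \<sigma>" for p
  proof -
    have "p \<in> T" "p < \<sigma>" using p unfolding preds_def by auto
    moreover from this have "p \<notin> B" using \<sigma>(2) by (meson leD)
    ultimately show ?thesis
      using \<sigma>T(2) unfolding B_def by (auto dest: order.strict_implies_order order_trans)
  qed
  then have "limit_node T \<sigma>" and preds_C: "\<forall>p\<in>preds T \<sigma>. \<exists>c\<in>C. p < c"
    using tree_minimal_upper_bound_of_chain_without_max[OF tree C no_max \<sigma>T(1,3)] by blast+
  then have "\<sigma> \<le> u" if "u \<in> T" "\<forall>c\<in>C. c \<le> u" for u
    using Hausdorff_limit_node_le[OF tree H _ that(1)] that(2)
    by (meson order.strict_trans2)
  then show ?thesis using \<sigma>T unfolding lub_in_def by blast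
qed

lemma compact_Hausdorff_coarse_wedge_imp_chain_complete:
  assumes tree: "is_tree T" and cp: "compact_space (coarse_wedge_topology T)"
    and H: "Hausdorff_space (coarse_wedge_topology T)"
  shows "chain_complete T"
  unfolding chain_complete_iff_lub_in
proof (intro allI impI)
  fix C assume C: "C \<subseteq> T" "C \<noteq> {}" "\<forall>x\<in>C. \<forall>y\<in>C. x \<le> y \<or> y \<le> x"
  then obtain w where "w \<in> T" "\<forall>c\<in>C. c \<le> w"
    using compact_Hausdorff_coarse_wedge_chain_bounded[OF tree cp H] by blast
  then show "\<exists>s. lub_in T C s"
    using Hausdorff_coarse_wedge_bounded_chain_has_lub[OF tree H C] by blast
qed

text \<open>Two incomparable nodes have a greatest common predecessor d (by chain-completeness) or
  none at all; the successors of d towards them, resp. the minimal elements below them, are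
  incomparable.\<close>
lemma chain_complete_tree_separating_subbasic_nodes:
  assumes tree: "is_tree T" and cc: "chain_complete T"
    and st: "s \<in> T" "t \<in> T" "\<not> s \<le> t" "\<not> t \<le> s"
  shows "\<exists>a b. subbasic_node T a \<and> subbasic_node T b \<and> a \<le> s \<and> b \<le> t \<and> \<not> a \<le> b \<and> \<not> b \<le> a"
proof -
  define D where "D = {u \<in> T. u \<le> s \<and> u \<le> t}"
  show ?thesis
  proof (cases "D = {}")
    case True
    obtain a b where a: "a \<in> minimal_elements T" "a \<le> s" and b: "b \<in> minimal_elements T" "b \<le> t"
      using tree_minimal_below[OF tree] st(1,2) by meson
    then have "a \<in> T" "b \<in> T" unfolding minimal_elements_def by auto
    then have "\<not> a \<le> b" "\<not> b \<le> a"
      using True a(2) b(2) unfolding D_def by (blast intro: order_trans)+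
    then show ?thesis using a b unfolding subbasic_node_def by blast
  next
    case False
    have "D \<subseteq> T" "\<forall>x\<in>D. \<forall>y\<in>D. x \<le> y \<or> y \<le> x"
      using tree_below_comparable[OF tree st(1)] unfolding D_def by auto
    then obtain d where d: "lub_in T D d"
      using cc[unfolded chain_complete_iff_lub_in, rule_format, OF _ False] by blast
    then have dT: "d \<in> T" "d \<le> s" "d \<le> t"
      using st(1,2) unfolding lub_in_def D_def by auto
    then have "d < s" "d < t" using st(3,4) by (auto simp: less_le)
    then obtain a b where a: "subbasic_node T a" "d < a" "a \<le> s"
      and b: "subbasic_node T b" "d < b" "b \<le> t"
      using tree_subbasic_node_between[OF tree dT(1)] st(1,2) by meson
    have "\<not> a \<le> d" "\<not> b \<le> d" using a(2) b(2) by (simp_all add: leD)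
    then have "a \<notin> D" "b \<notin> D" using d unfolding lub_in_def by auto
    then have "\<not> a \<le> b" "\<not> b \<le> a"
      using a b subbasic_node_in unfolding D_def by (blast intro: order_trans)+
    then show ?thesis using a b by blast
  qed
qed

lemma coarse_wedge_separates_less:
  assumes tree: "is_tree T" and xy: "x \<in> T" "y \<in> T" "x < y"
  shows "\<exists>U W. openin (coarse_wedge_topology T) U \<and> openin (coarse_wedge_topology T) W \<and>
    x \<in> U \<and> y \<in> W \<and> disjnt U W"
proof -
  obtain u where u: "subbasic_node T u" "x < u" "u \<le> y"
    using tree_subbasic_node_between[OF tree xy] by blast
  then have "x \<in> T - V T u" "y \<in> V T u"
    using xy unfolding V_def by (auto simp: leD)
  moreover have "disjnt (T - V T u) (V T u)" unfolding disjnt_def by blast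
  ultimately show ?thesis using openin_V[OF u(1)] openin_Diff_V[OF u(1)] by blast
qed

lemma chain_complete_imp_Hausdorff_coarse_wedge:
  assumes tree: "is_tree T" and cc: "chain_complete T"
  shows "Hausdorff_space (coarse_wedge_topology T)"
  unfolding Hausdorff_space_def topspace_coarse_wedge_topology[OF tree]
proof (intro allI impI)
  fix s t assume "s \<in> T \<and> t \<in> T \<and> s \<noteq> t"
  then have st: "s \<in> T" "t \<in> T" "s \<noteq> t" by auto
  let ?X = "coarse_wedge_topology T"
  consider "s < t" | "t < s" | "\<not> s \<le> t" "\<not> t \<le> s"
    using st(3) by (auto simp: less_le)
  then show "\<exists>U W. openin ?X U \<and> openin ?X W \<and> s \<in> U \<and> t \<in> W \<and> disjnt U W"
  proof cases
    case 1
    then show ?thesis using coarse_wedge_separates_less[OF tree st(1,2)] by blast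
  next
    case 2
    then show ?thesis using coarse_wedge_separates_less[OF tree st(2,1)] by (meson disjnt_sym)
  next
    case 3
    then obtain a b where ab: "subbasic_node T a" "subbasic_node T b" "a \<le> s" "b \<le> t"
      "\<not> a \<le> b" "\<not> b \<le> a"
      using chain_complete_tree_separating_subbasic_nodes[OF tree cc st(1,2)] by blast
    then have "disjnt (V T a) (V T b)"
      using V_disjoint_if_incomparable[OF tree] subbasic_node_in unfolding disjnt_def by blast
    moreover have "s \<in> V T a" "t \<in> V T b" using ab st unfolding V_def by auto
    ultimately show ?thesis using openin_V ab(1,2) by blast
  qed
qed

text \<open>The supremum of the chain of nodes u with T - V u in the cover is not in any of these
  complements, so it lies in some V t with t below one of the u.\<close>
lemma coarse_wedge_subbase_cover_chain_of_complements:
  assumes tree: "is_tree T" and cc: "chain_complete T"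
    and C: "C \<subseteq> coarse_wedge_subbase T" "T \<subseteq> \<Union>C"
    and B: "B = {u. subbasic_node T u \<and> T - V T u \<in> C}" "B \<noteq> {}"
      "\<forall>x\<in>B. \<forall>y\<in>B. x \<le> y \<or> y \<le> x"
  shows "\<exists>t u. V T t \<in> C \<and> u \<in> B \<and> t \<le> u"
proof -
  have BT: "B \<subseteq> T" using B(1) subbasic_node_in by blast
  obtain \<sigma> where \<sigma>: "lub_in T B \<sigma>"
    using cc[unfolded chain_complete_iff_lub_in, rule_format, OF BT B(2)] B(3) by blast
  then obtain K where K: "K \<in> C" "\<sigma> \<in> K" using C(2) unfolding lub_in_def by blast
  from K(1) C(1) have "K \<in> coarse_wedge_subbase T" by blast
  then show ?thesis
  proof (cases rule: coarse_wedge_subbase_cases)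
    case (1 t)
    then have t: "t \<in> T" "t \<le> \<sigma>" using K(2) subbasic_node_in unfolding V_def by auto
    show ?thesis
    proof (cases "\<forall>u\<in>B. u \<le> t")
      case True
      then have "t = \<sigma>" using \<sigma> t unfolding lub_in_def by (auto intro: order.antisym)
      then have "t \<in> B" using lub_in_mem_if_subbasic_node[OF \<sigma> _ BT B(2)] 1(1) by blast
      then show ?thesis using 1(2) K(1) by blast
    next
      case False
      then obtain u where u: "u \<in> B" "\<not> u \<le> t" by blast
      then have "t \<le> u"
        using tree_below_comparable[OF tree _ t(1), of \<sigma> u] \<sigma> BT t(2) unfolding lub_in_def by blast
      then show ?thesis using u(1) 1(2) K(1) by blast
    qed
  next
    case (2 t)
    then have "t \<in> B" using K(1) B(1) by blast
    then have "\<sigma> \<in> V T t" using \<sigma> unfolding lub_in_def V_def by blast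
    then show ?thesis using K(2) 2(2) by blast
  qed
qed

lemma coarse_wedge_subbase_cover_contains_minimal_V:
  assumes C: "C \<subseteq> coarse_wedge_subbase T" "T \<subseteq> \<Union>C"
    and m: "m \<in> minimal_elements T" and no_complement: "\<forall>t. subbasic_node T t \<longrightarrow> T - V T t \<notin> C"
  shows "V T m \<in> C"
proof -
  have "m \<in> T" using m unfolding minimal_elements_def by blast
  then obtain K where K: "K \<in> C" "m \<in> K" using C(2) by blast
  from K(1) C(1) have "K \<in> coarse_wedge_subbase T" by blast
  then show ?thesis
  proof (cases rule: coarse_wedge_subbase_cases)
    case (1 t)
    then have "t = m"
      using minimal_elements_eq_if_le[OF m] subbasic_node_in K(2) unfolding V_def by blast
    then show ?thesis using 1(2) K(1) by blast
  next
    case (2 t)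
    then show ?thesis using no_complement K(1) by simp
  qed
qed

lemma coarse_wedge_subbase_cover_has_finite_subcover:
  assumes tree: "is_tree T" and cc: "chain_complete T" and fin: "finite (minimal_elements T)"
    and C: "C \<subseteq> coarse_wedge_subbase T" "T \<subseteq> \<Union>C"
  shows "\<exists>C'. finite C' \<and> C' \<subseteq> C \<and> T \<subseteq> \<Union>C'"
proof -
  define B where "B = {u. subbasic_node T u \<and> T - V T u \<in> C}"
  consider (no_complements) "B = {}"
    | (incomparable) u1 u2 where "u1 \<in> B" "u2 \<in> B" "\<not> u1 \<le> u2" "\<not> u2 \<le> u1"
    | (chain) "B \<noteq> {}" "\<forall>x\<in>B. \<forall>y\<in>B. x \<le> y \<or> y \<le> x"
    by blast
  then show ?thesis
  proof cases
    case no_complements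
    then have "V T ` minimal_elements T \<subseteq> C"
      using coarse_wedge_subbase_cover_contains_minimal_V[OF C] unfolding B_def by auto
    moreover have "T \<subseteq> \<Union>(V T ` minimal_elements T)"
      using tree_minimal_below[OF tree] unfolding V_def by blast
    ultimately show ?thesis using fin by blast
  next
    case incomparable
    then have "V T u1 \<inter> V T u2 = {}"
      using V_disjoint_if_incomparable[OF tree] subbasic_node_in unfolding B_def by blast
    then have "T \<subseteq> \<Union>{T - V T u1, T - V T u2}" by blast
    moreover have "{T - V T u1, T - V T u2} \<subseteq> C" using incomparable(1,2) unfolding B_def by blast
    ultimately show ?thesis by (meson finite.emptyI finite.insertI)
  next
    case chain
    then obtain t u where tu: "V T t \<in> C" "u \<in> B" "t \<le> u"
      using coarse_wedge_subbase_cover_chain_of_complements[OF tree cc C B_def] by blast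
    then have "T \<subseteq> \<Union>{V T t, T - V T u}" unfolding V_def by (auto intro: order_trans)
    moreover have "{V T t, T - V T u} \<subseteq> C" using tu unfolding B_def by blast
    ultimately show ?thesis by (meson finite.emptyI finite.insertI)
  qed
qed

lemma chain_complete_imp_compact_coarse_wedge:
  assumes tree: "is_tree T" and cc: "chain_complete T" and fin: "finite (minimal_elements T)"
  shows "compact_space (coarse_wedge_topology T)"
proof (rule Alexander_subbase_alt[where U = T and \<B> = "coarse_wedge_subbase T"])
  show "T \<subseteq> \<Union>(coarse_wedge_subbase T)" using Union_coarse_wedge_subbase[OF tree] by simp
  show "\<exists>C'. finite C' \<and> C' \<subseteq> C \<and> T \<subseteq> \<Union>C'"
    if "C \<subseteq> coarse_wedge_subbase T" "T \<subseteq> \<Union>C" for C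
    using coarse_wedge_subbase_cover_has_finite_subcover[OF tree cc fin that] .
  show "topology (arbitrary union_of
      (finite intersection_of (\<lambda>x. x \<in> coarse_wedge_subbase T) relative_to T))
    = coarse_wedge_topology T"
    by (simp add: coarse_wedge_topology_eq topology_generated_by_eq_subbase_topology
        Union_coarse_wedge_subbase[OF tree])
qed

theorem corollary3p5:
  fixes T :: "'a::order set"
  assumes "is_tree T"
  shows "compact_space (coarse_wedge_topology T) \<and> Hausdorff_space (coarse_wedge_topology T)
     \<longleftrightarrow> chain_complete T \<and> finite (minimal_elements T)"
  using compact_coarse_wedge_imp_finite_minimal_elements[OF assms]
    compact_Hausdorff_coarse_wedge_imp_chain_complete[OF assms]
    chain_complete_imp_compact_coarse_wedge[OF assms]
    chain_complete_imp_Hausdorff_coarse_wedge[OF assms]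
  by blast

end
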